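(* Let $a\in\mathbb{R}$, $h>0$, $b=a+kh$ with $k\ge2$, $\mathbb{T}=\{a,a+h,\dots,b\}$, and let $L(t,u,v):\mathbb{T}^\kappa\times\mathbb{R}^2\to\mathbb{R}$ have continuous second partial derivatives in $(u,v)$. If $\hat y$ is a local minimizer of $$\mathcal{L}(y)=\int_a^bL(t,y(\sigma(t)),y^\Delta(t))\Delta t\to\min,\qquad y(a)=A,\ y(b)=B,$$ (local with respect to the norm $\|y\|=\max_{\mathbb{T}^\kappa}|y(\sigma(t))|+\max_{\mathbb{T}^\kappa}|y^\Delta(t)|$), then for all $t\in\mathbb{T}^{\kappa^2}$, $$h^2L_{uu}[\hat y](t)+2hL_{uv}[\hat y](t)+L_{vv}[\hat y](t)+L_{vv}[\hat y](\sigma(t))\ge0,$$ where $[\hat y](t)=(t,\hat y(\sigma(t)),\hat y^\Delta(t))$.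
   Context: $\mathbb{T}^\kappa=\mathbb{T}\setminus\{b\}$, $\mathbb{T}^{\kappa^2}=\mathbb{T}\setminus\{b-h,b\}$, $\sigma(t)=t+h$, $y^\Delta(t)=(y(t+h)-y(t))/h$, and $\int_a^bG(t)\Delta t:=h\sum_{j=0}^{k-1}G(a+jh)$. A function $\hat y$ with $\hat y(a)=A$, $\hat y(b)=B$ is a local minimizer if there is $\delta>0$ such that $\mathcal{L}(\hat y)\le\mathcal{L}(y)$ for all $y:\mathbb{T}\to\mathbb{R}$ with $y(a)=A$, $y(b)=B$ and $\|y-\hat y\|<\delta$. *)

theory Defs
  imports "HOL-Analysis.Analysis"
begin

definition Tset :: "real \<Rightarrow> real \<Rightarrow> nat \<Rightarrow> real set" where
  "Tset a h k = {a + real j * h | j. j \<le> k}"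

definition Tkappa :: "real \<Rightarrow> real \<Rightarrow> nat \<Rightarrow> real set" where
  "Tkappa a h k = {a + real j * h | j. j < k}"

definition Tkappa2 :: "real \<Rightarrow> real \<Rightarrow> nat \<Rightarrow> real set" where
  "Tkappa2 a h k = {a + real j * h | j. j + 1 < k}"

definition sigma :: "real \<Rightarrow> real \<Rightarrow> real" where
  "sigma h t = t + h"

definition delta_deriv :: "real \<Rightarrow> (real \<Rightarrow> real) \<Rightarrow> real \<Rightarrow> real" where
  "delta_deriv h y t = (y (t + h) - y t) / h"

definition delta_int :: "real \<Rightarrow> real \<Rightarrow> nat \<Rightarrow> (real \<Rightarrow> real) \<Rightarrow> real" where
  "delta_int a h k G = h * (\<Sum>j<k. G (a + real j * h))"

definition functional :: "real \<Rightarrow> real \<Rightarrow> nat \<Rightarrow> (real \<Rightarrow> real \<Rightarrow> real \<Rightarrow> real)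
    \<Rightarrow> (real \<Rightarrow> real) \<Rightarrow> real" where
  "functional a h k L y = delta_int a h k (\<lambda>t. L t (y (sigma h t)) (delta_deriv h y t))"

definition ts_norm :: "real \<Rightarrow> real \<Rightarrow> nat \<Rightarrow> (real \<Rightarrow> real) \<Rightarrow> real" where
  "ts_norm a h k y = Max ((\<lambda>t. \<bar>y (sigma h t)\<bar>) ` Tkappa a h k)
                   + Max ((\<lambda>t. \<bar>delta_deriv h y t\<bar>) ` Tkappa a h k)"

definition local_minimizer :: "real \<Rightarrow> real \<Rightarrow> nat \<Rightarrow> (real \<Rightarrow> real \<Rightarrow> real \<Rightarrow> real)
    \<Rightarrow> real \<Rightarrow> real \<Rightarrow> (real \<Rightarrow> real) \<Rightarrow> bool" where
  "local_minimizer a h k L A B yh \<longleftrightarrow>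
     yh a = A \<and> yh (a + real k * h) = B \<and>
     (\<exists>\<delta>>0. \<forall>y. y a = A \<and> y (a + real k * h) = B \<and>
        ts_norm a h k (\<lambda>t. y t - yh t) < \<delta> \<longrightarrow>
        functional a h k L yh \<le> functional a h k L y)"

end

theory Submission imports Defs begin

(* Along a variation y = yh + e*eta with
   eta(a) = eta(b) = 0, the functional becomes a twice differentiable function of
   the real parameter e that has a local minimum at e = 0; hence its second
   derivative at 0, the second variation, is nonnegative.  Taking for eta the unit bump at sigma(t), only the
   summands at t and sigma(t) of the second variation survive, and after using
   the symmetry Luv = Lvu of the mixed partial derivatives (Schwarz's theorem,
   mixed_partials_eq) the second variation equals the Legendre expression divided
   by h (second_variation_unit_bump). *)

section \<open>Real analysis\<close>

lemma has_real_derivative_along_line: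
  fixes F Fu Fv :: "real \<Rightarrow> real \<Rightarrow> real"
  assumes dF: "\<And>u v. ((\<lambda>(p::real \<times> real). F (fst p) (snd p)) has_derivative
          (\<lambda>d. Fu u v * fst d + Fv u v * snd d)) (at (u, v))"
  shows "((\<lambda>e. F (u + e*p) (v + e*q)) has_real_derivative
           (Fu (u+x*p) (v+x*q) * p + Fv (u+x*p) (v+x*q) * q)) (at x)"
proof -
  have line: "((\<lambda>e. (u + e*p, v + e*q)) has_derivative (\<lambda>d. (d*p, d*q))) (at x)"
    by (auto intro!: derivative_eq_intros)
  have "((\<lambda>(p::real \<times> real). F (fst p) (snd p)) \<circ> (\<lambda>e. (u + e*p, v + e*q)) has_derivative
     (\<lambda>d. Fu (u+x*p) (v+x*q) * fst d + Fv (u+x*p) (v+x*q) * snd d) \<circ> (\<lambda>d. (d*p, d*q))) (at x)"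
    by (rule diff_chain_at[OF line dF])
  hence "((\<lambda>e. F (u + e*p) (v + e*q)) has_derivative
     (\<lambda>d. Fu (u+x*p) (v+x*q) * (d*p) + Fv (u+x*p) (v+x*q) * (d*q))) (at x)"
    by (simp add: o_def)
  then show ?thesis
    unfolding has_field_derivative_def
    by (rule has_derivative_eq_rhs) (auto simp: fun_eq_iff algebra_simps)
qed

lemma has_real_derivative_partial1:
  fixes F Fu Fv :: "real \<Rightarrow> real \<Rightarrow> real"
  assumes dF: "\<And>u v. ((\<lambda>(p::real \<times> real). F (fst p) (snd p)) has_derivative
          (\<lambda>d. Fu u v * fst d + Fv u v * snd d)) (at (u, v))"
  shows "((\<lambda>x. F x w) has_real_derivative Fu x w) (at x)"
  using has_real_derivative_along_line[OF dF, of 0 1 w 0 x] by simp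

lemma has_real_derivative_partial2:
  fixes F Fu Fv :: "real \<Rightarrow> real \<Rightarrow> real"
  assumes dF: "\<And>u v. ((\<lambda>(p::real \<times> real). F (fst p) (snd p)) has_derivative
          (\<lambda>d. Fu u v * fst d + Fv u v * snd d)) (at (u, v))"
  shows "((\<lambda>y. F w y) has_real_derivative Fv w y) (at y)"
  using has_real_derivative_along_line[OF dF, of w 0 0 1 y] by simp

lemma second_derivative_nonneg_at_local_min:
  fixes \<phi> \<phi>' :: "real \<Rightarrow> real"
  assumes d1: "\<And>x. (\<phi> has_real_derivative \<phi>' x) (at x)"
    and d2: "(\<phi>' has_real_derivative D) (at 0)"
    and d: "d > 0" and local_min: "\<And>x. \<bar>x\<bar> < d \<Longrightarrow> \<phi> 0 \<le> \<phi> x"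
  shows "D \<ge> 0"
proof (rule ccontr)
  assume "\<not> D \<ge> 0"
  hence "D < 0" by simp
  have crit: "\<phi>' 0 = 0"
    by (rule DERIV_local_min[OF d1 d]) (auto intro: local_min)
  obtain d' where d': "d' > 0" and decr: "\<forall>x>0. x < d' \<longrightarrow> \<phi>' 0 > \<phi>' (0 + x)"
    using DERIV_neg_dec_right[OF d2 \<open>D < 0\<close>] by blast
  define x where "x = min d d' / 2"
  have x: "0 < x" "x < d" "x < d'" using d d' by (auto simp: x_def)
  obtain z where z: "0 < z" "z < x" "\<phi> x - \<phi> 0 = (x - 0) * \<phi>' z"
    using MVT2[OF x(1), of \<phi> \<phi>'] d1 by auto
  have "\<phi>' z < 0" using decr z x crit by auto
  hence "x * \<phi>' z < 0" using x by (simp add: mult_pos_neg)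
  hence "\<phi> x < \<phi> 0" using z by simp
  moreover have "\<phi> 0 \<le> \<phi> x" using local_min x by auto
  ultimately show False by simp
qed

lemma double_difference_uv:
  fixes F Fu Fv Fuu Fuv :: "real \<Rightarrow> real \<Rightarrow> real"
  assumes dF: "\<And>u v. ((\<lambda>(p::real \<times> real). F (fst p) (snd p)) has_derivative
          (\<lambda>d. Fu u v * fst d + Fv u v * snd d)) (at (u, v))"
    and dFu: "\<And>u v. ((\<lambda>(p::real \<times> real). Fu (fst p) (snd p)) has_derivative
          (\<lambda>d. Fuu u v * fst d + Fuv u v * snd d)) (at (u, v))"
    and s: "s > 0"
  shows "\<exists>\<xi> \<eta>. u < \<xi> \<and> \<xi> < u + s \<and> v < \<eta> \<and> \<eta> < v + s \<and>
    F (u+s) (v+s) - F (u+s) v - F u (v+s) + F u v = s * s * Fuv \<xi> \<eta>"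
proof -
  obtain \<xi> where \<xi>: "u < \<xi>" "\<xi> < u + s"
    "(F (u+s) (v+s) - F (u+s) v) - (F u (v+s) - F u v) = (u + s - u) * (Fu \<xi> (v+s) - Fu \<xi> v)"
    using MVT2[of u "u+s" "\<lambda>x. F x (v+s) - F x v" "\<lambda>x. Fu x (v+s) - Fu x v"] s
      DERIV_diff[OF has_real_derivative_partial1[OF dF] has_real_derivative_partial1[OF dF]]
    by auto
  obtain \<eta> where \<eta>: "v < \<eta>" "\<eta> < v + s" "Fu \<xi> (v+s) - Fu \<xi> v = (v + s - v) * Fuv \<xi> \<eta>"
    using MVT2[of v "v+s" "\<lambda>y. Fu \<xi> y" "\<lambda>y. Fuv \<xi> y"] s has_real_derivative_partial2[OF dFu]
    by auto
  show ?thesis using \<xi> \<eta> by (intro exI[of _ \<xi>] exI[of _ \<eta>]) (simp add: algebra_simps)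
qed

lemma double_difference_vu:
  fixes F Fu Fv Fvu Fvv :: "real \<Rightarrow> real \<Rightarrow> real"
  assumes dF: "\<And>u v. ((\<lambda>(p::real \<times> real). F (fst p) (snd p)) has_derivative
          (\<lambda>d. Fu u v * fst d + Fv u v * snd d)) (at (u, v))"
    and dFv: "\<And>u v. ((\<lambda>(p::real \<times> real). Fv (fst p) (snd p)) has_derivative
          (\<lambda>d. Fvu u v * fst d + Fvv u v * snd d)) (at (u, v))"
    and s: "s > 0"
  shows "\<exists>\<xi> \<eta>. u < \<xi> \<and> \<xi> < u + s \<and> v < \<eta> \<and> \<eta> < v + s \<and>
    F (u+s) (v+s) - F (u+s) v - F u (v+s) + F u v = s * s * Fvu \<xi> \<eta>"
proof -
  obtain \<eta> where \<eta>: "v < \<eta>" "\<eta> < v + s"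
    "(F (u+s) (v+s) - F u (v+s)) - (F (u+s) v - F u v) = (v + s - v) * (Fv (u+s) \<eta> - Fv u \<eta>)"
    using MVT2[of v "v+s" "\<lambda>y. F (u+s) y - F u y" "\<lambda>y. Fv (u+s) y - Fv u y"] s
      DERIV_diff[OF has_real_derivative_partial2[OF dF] has_real_derivative_partial2[OF dF]]
    by auto
  obtain \<xi> where \<xi>: "u < \<xi>" "\<xi> < u + s" "Fv (u+s) \<eta> - Fv u \<eta> = (u + s - u) * Fvu \<xi> \<eta>"
    using MVT2[of u "u+s" "\<lambda>x. Fv x \<eta>" "\<lambda>x. Fvu x \<eta>"] s has_real_derivative_partial1[OF dFv]
    by auto
  show ?thesis using \<xi> \<eta> by (intro exI[of _ \<xi>] exI[of _ \<eta>]) (simp add: algebra_simps)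
qed

text \<open>Schwarz's theorem: if the mixed partials are continuous, they agree.  Both are
  limits of the double difference quotients over shrinking squares.\<close>
lemma mixed_partials_eq:
  fixes F Fu Fv Fuu Fuv Fvu Fvv :: "real \<Rightarrow> real \<Rightarrow> real"
  assumes dF: "\<And>u v. ((\<lambda>(p::real \<times> real). F (fst p) (snd p)) has_derivative
          (\<lambda>d. Fu u v * fst d + Fv u v * snd d)) (at (u, v))"
    and dFu: "\<And>u v. ((\<lambda>(p::real \<times> real). Fu (fst p) (snd p)) has_derivative
          (\<lambda>d. Fuu u v * fst d + Fuv u v * snd d)) (at (u, v))"
    and dFv: "\<And>u v. ((\<lambda>(p::real \<times> real). Fv (fst p) (snd p)) has_derivative
          (\<lambda>d. Fvu u v * fst d + Fvv u v * snd d)) (at (u, v))"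
    and cuv: "continuous_on UNIV (\<lambda>(p::real \<times> real). Fuv (fst p) (snd p))"
    and cvu: "continuous_on UNIV (\<lambda>(p::real \<times> real). Fvu (fst p) (snd p))"
  shows "Fuv u v = Fvu u v"
proof (rule ccontr)
  assume ne: "Fuv u v \<noteq> Fvu u v"
  define e where "e = \<bar>Fuv u v - Fvu u v\<bar> / 2"
  have e: "e > 0" using ne by (simp add: e_def)
  obtain d1 where d1: "d1 > 0" and near_uv: "\<And>p. dist p (u,v) < d1 \<Longrightarrow>
      dist (Fuv (fst p) (snd p)) (Fuv u v) < e"
    using cuv e unfolding continuous_on_iff by (metis UNIV_I fst_conv snd_conv)
  obtain d2 where d2: "d2 > 0" and near_vu: "\<And>p. dist p (u,v) < d2 \<Longrightarrow>
      dist (Fvu (fst p) (snd p)) (Fvu u v) < e"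
    using cvu e unfolding continuous_on_iff by (metis UNIV_I fst_conv snd_conv)
  define s where "s = min d1 d2 / 2"
  have s: "s > 0" using d1 d2 by (simp add: s_def)
  have in_square: "dist (x,y) (u,v) < min d1 d2" if "u < x" "x < u+s" "v < y" "y < v + s" for x y
  proof -
    have "dist (x,y) (u,v) \<le> \<bar>x - u\<bar> + \<bar>y - v\<bar>"
      unfolding dist_Pair_Pair dist_real_def
      using sqrt_sum_squares_le_sum_abs[of "x-u" "y-v"] by simp
    also have "\<dots> < 2 * s" using that by simp
    finally show ?thesis by (simp add: s_def)
  qed
  obtain \<xi> \<eta> where \<xi>\<eta>: "u < \<xi>" "\<xi> < u + s" "v < \<eta>" "\<eta> < v + s"
    "F (u+s) (v+s) - F (u+s) v - F u (v+s) + F u v = s * s * Fuv \<xi> \<eta>"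
    using double_difference_uv[OF dF dFu s] by blast
  obtain \<xi>' \<eta>' where \<xi>\<eta>': "u < \<xi>'" "\<xi>' < u + s" "v < \<eta>'" "\<eta>' < v + s"
    "F (u+s) (v+s) - F (u+s) v - F u (v+s) + F u v = s * s * Fvu \<xi>' \<eta>'"
    using double_difference_vu[OF dF dFv s] by blast
  have eq: "Fuv \<xi> \<eta> = Fvu \<xi>' \<eta>'" using \<xi>\<eta>(5) \<xi>\<eta>'(5) s by simp
  have "dist (Fuv \<xi> \<eta>) (Fuv u v) < e"
    using near_uv[of "(\<xi>, \<eta>)"] in_square[OF \<xi>\<eta>(1-4)] by simp
  moreover have "dist (Fvu \<xi>' \<eta>') (Fvu u v) < e"
    using near_vu[of "(\<xi>', \<eta>')"] in_square[OF \<xi>\<eta>'(1-4)] by simp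
  ultimately show False using eq unfolding e_def dist_real_def by (simp add: abs_if split: if_splits)
qed

section \<open>Variations of the discrete functional\<close>

text \<open>The second variation of the functional at yh in direction eta: the Delta
  integral of the Hessian of L at [yh](t), evaluated on (eta(sigma t), eta^Delta(t)).\<close>
definition second_variation :: "real \<Rightarrow> real \<Rightarrow> nat \<Rightarrow>
    (real \<Rightarrow> real \<Rightarrow> real \<Rightarrow> real) \<Rightarrow> (real \<Rightarrow> real \<Rightarrow> real \<Rightarrow> real) \<Rightarrow>
    (real \<Rightarrow> real \<Rightarrow> real \<Rightarrow> real) \<Rightarrow> (real \<Rightarrow> real \<Rightarrow> real \<Rightarrow> real) \<Rightarrow>
    (real \<Rightarrow> real) \<Rightarrow> (real \<Rightarrow> real) \<Rightarrow> real" where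
  "second_variation a h k Luu Luv Lvu Lvv yh \<eta> = delta_int a h k (\<lambda>t.
     (Luu t (yh (sigma h t)) (delta_deriv h yh t) * \<eta> (sigma h t)
      + Luv t (yh (sigma h t)) (delta_deriv h yh t) * delta_deriv h \<eta> t) * \<eta> (sigma h t)
   + (Lvu t (yh (sigma h t)) (delta_deriv h yh t) * \<eta> (sigma h t)
      + Lvv t (yh (sigma h t)) (delta_deriv h yh t) * delta_deriv h \<eta> t) * delta_deriv h \<eta> t)"

lemma delta_deriv_add_scaled:
  "delta_deriv h (\<lambda>x. y x + e * \<eta> x) t = delta_deriv h y t + e * delta_deriv h \<eta> t"
  by (simp add: delta_deriv_def add_divide_distrib [symmetric] right_diff_distrib)

lemma Tkappa_eq_image: "Tkappa a h k = (\<lambda>j. a + real j * h) ` {..<k}"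
  by (auto simp: Tkappa_def)

lemma ts_norm_nonneg:
  assumes "k > 0"
  shows "ts_norm a h k \<eta> \<ge> 0"
proof -
  have fin: "finite (Tkappa a h k)" and ne: "a \<in> Tkappa a h k"
    using assms by (auto simp: Tkappa_eq_image image_iff intro: bexI[of _ 0])
  show ?thesis
    unfolding ts_norm_def using fin ne
    by (intro add_nonneg_nonneg; subst Max_ge_iff) auto
qed

lemma ts_norm_scale:
  assumes "k > 0"
  shows "ts_norm a h k (\<lambda>t. e * \<eta> t) = \<bar>e\<bar> * ts_norm a h k \<eta>"
proof -
  have fin: "finite (Tkappa a h k)" and ne: "Tkappa a h k \<noteq> {}"
    using assms by (auto simp: Tkappa_eq_image)
  have Max_scale: "Max ((\<lambda>t. \<bar>e\<bar> * f t) ` Tkappa a h k) = \<bar>e\<bar> * Max (f ` Tkappa a h k)"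
    for f :: "real \<Rightarrow> real"
    using mono_Max_commute[of "\<lambda>x. \<bar>e\<bar> * x" "f ` Tkappa a h k"] fin ne
    by (simp add: mono_def mult_left_mono image_image)
  have "delta_deriv h (\<lambda>t. e * \<eta> t) t = e * delta_deriv h \<eta> t" for t
    using delta_deriv_add_scaled[of h "\<lambda>_. 0" e \<eta> t] by (simp add: delta_deriv_def)
  then show ?thesis
    unfolding ts_norm_def by (simp add: abs_mult Max_scale distrib_left)
qed

lemma local_min_along_variation:
  assumes k: "k > 0" and min: "local_minimizer a h k L A B yh"
    and \<eta>a: "\<eta> a = 0" and \<eta>b: "\<eta> (a + real k * h) = 0"
  shows "\<exists>d>0. \<forall>e. \<bar>e\<bar> < d \<longrightarrow>
           functional a h k L yh \<le> functional a h k L (\<lambda>t. yh t + e * \<eta> t)"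
proof -
  obtain \<delta> where \<delta>: "\<delta> > 0" and yA: "yh a = A" and yB: "yh (a + real k * h) = B"
    and mn: "\<And>y. y a = A \<and> y (a + real k * h) = B \<and> ts_norm a h k (\<lambda>t. y t - yh t) < \<delta>
               \<Longrightarrow> functional a h k L yh \<le> functional a h k L y"
    using min unfolding local_minimizer_def by blast
  define N where "N = ts_norm a h k \<eta>"
  have N: "N \<ge> 0" using ts_norm_nonneg[OF k] by (simp add: N_def)
  define d where "d = \<delta> / (N + 1)"
  have "\<forall>e. \<bar>e\<bar> < d \<longrightarrow> functional a h k L yh \<le> functional a h k L (\<lambda>t. yh t + e * \<eta> t)"
  proof (intro allI impI mn conjI)
    fix e :: real assume e: "\<bar>e\<bar> < d"
    have "\<bar>e\<bar> * N \<le> \<bar>e\<bar> * (N + 1)" by (simp add: mult_left_mono)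
    also have "\<dots> < d * (N + 1)" using e N by (simp add: mult_strict_right_mono)
    also have "\<dots> = \<delta>" using N by (simp add: d_def)
    finally show "ts_norm a h k (\<lambda>t. yh t + e * \<eta> t - yh t) < \<delta>"
      using ts_norm_scale[OF k, where e=e and \<eta>=\<eta>] by (simp add: N_def)
  qed (use yA yB \<eta>a \<eta>b in simp_all)
  moreover have "d > 0" using \<delta> N by (simp add: d_def)
  ultimately show ?thesis by blast
qed

text \<open>It is the second
  derivative at 0 of e \<mapsto> functional (yh + e*eta).\<close>
lemma second_variation_nonneg:
  fixes L Lu Lv Luu Luv Lvu Lvv :: "real \<Rightarrow> real \<Rightarrow> real \<Rightarrow> real"
  assumes k: "k > 0"
    and dL: "\<And>t u v. t \<in> Tkappa a h k \<Longrightarrow>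
       ((\<lambda>(p::real \<times> real). L t (fst p) (snd p)) has_derivative
          (\<lambda>d. Lu t u v * fst d + Lv t u v * snd d)) (at (u, v))"
    and dLu: "\<And>t u v. t \<in> Tkappa a h k \<Longrightarrow>
       ((\<lambda>(p::real \<times> real). Lu t (fst p) (snd p)) has_derivative
          (\<lambda>d. Luu t u v * fst d + Luv t u v * snd d)) (at (u, v))"
    and dLv: "\<And>t u v. t \<in> Tkappa a h k \<Longrightarrow>
       ((\<lambda>(p::real \<times> real). Lv t (fst p) (snd p)) has_derivative
          (\<lambda>d. Lvu t u v * fst d + Lvv t u v * snd d)) (at (u, v))"
    and min: "local_minimizer a h k L A B yh"
    and \<eta>a: "\<eta> a = 0" and \<eta>b: "\<eta> (a + real k * h) = 0"
  shows "second_variation a h k Luu Luv Lvu Lvv yh \<eta> \<ge> 0"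
proof -
  define T where "T j = a + real j * h" for j
  have TK: "T j \<in> Tkappa a h k" if "j < k" for j using that by (auto simp: T_def Tkappa_def)
  define U P V Q where "U j = yh (sigma h (T j))" and "P j = \<eta> (sigma h (T j))"
    and "V j = delta_deriv h yh (T j)" and "Q j = delta_deriv h \<eta> (T j)" for j
  define \<phi> where "\<phi> e = functional a h k L (\<lambda>t. yh t + e * \<eta> t)" for e
  define \<phi>' where "\<phi>' e = h * (\<Sum>j<k. Lu (T j) (U j + e * P j) (V j + e * Q j) * P j
       + Lv (T j) (U j + e * P j) (V j + e * Q j) * Q j)" for e
  have \<phi>_sum: "\<phi> = (\<lambda>e. h * (\<Sum>j<k. L (T j) (U j + e * P j) (V j + e * Q j)))"
    by (simp add: fun_eq_iff \<phi>_def functional_def delta_int_def delta_deriv_add_scaled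
        T_def U_def P_def V_def Q_def)
  have d1: "(\<phi> has_real_derivative \<phi>' e) (at e)" for e
    unfolding \<phi>_sum \<phi>'_def
    by (intro DERIV_cmult DERIV_sum has_real_derivative_along_line[OF dL[OF TK]]) simp
  have d2: "(\<phi>' has_real_derivative second_variation a h k Luu Luv Lvu Lvv yh \<eta>) (at 0)"
  proof (rule DERIV_cong)
    show "(\<phi>' has_real_derivative h * (\<Sum>j<k.
       (Luu (T j) (U j + 0 * P j) (V j + 0 * Q j) * P j
        + Luv (T j) (U j + 0 * P j) (V j + 0 * Q j) * Q j) * P j
     + (Lvu (T j) (U j + 0 * P j) (V j + 0 * Q j) * P j
        + Lvv (T j) (U j + 0 * P j) (V j + 0 * Q j) * Q j) * Q j)) (at 0)"
      unfolding \<phi>'_def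
      by (intro DERIV_cmult DERIV_sum DERIV_add DERIV_cmult_right
          has_real_derivative_along_line[OF dLu[OF TK]]
          has_real_derivative_along_line[OF dLv[OF TK]]) simp_all
  qed (simp add: second_variation_def delta_int_def T_def U_def P_def V_def Q_def)
  obtain d where d: "d > 0"
    and local_min: "\<And>e. \<bar>e\<bar> < d \<Longrightarrow> \<phi> 0 \<le> \<phi> e"
    using local_min_along_variation[OF k min \<eta>a \<eta>b] by (auto simp: \<phi>_def)
  show ?thesis by (rule second_derivative_nonneg_at_local_min[OF d1 d2 d local_min])
qed

text \<open>For the unit bump at sigma(t) only the summands at t and sigma(t) of the second
  variation survive; with symmetric mixed partials they combine to the Legendre
  expression divided by h.\<close>
lemma second_variation_unit_bump:
  fixes Luu Luv Lvu Lvv :: "real \<Rightarrow> real \<Rightarrow> real \<Rightarrow> real"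
  assumes h: "h > 0" and j: "j + 1 < k" and t: "t = a + real j * h"
    and sym: "Luv t (yh (sigma h t)) (delta_deriv h yh t) = Lvu t (yh (sigma h t)) (delta_deriv h yh t)"
  shows "h * second_variation a h k Luu Luv Lvu Lvv yh (\<lambda>x. if x = sigma h t then 1 else 0) =
     h^2 * Luu t (yh (sigma h t)) (delta_deriv h yh t)
     + 2 * h * Luv t (yh (sigma h t)) (delta_deriv h yh t)
     + Lvv t (yh (sigma h t)) (delta_deriv h yh t)
     + Lvv (sigma h t) (yh (sigma h (sigma h t))) (delta_deriv h yh (sigma h t))"
proof -
  define T where "T i = a + real i * h" for i
  have T_inj: "T i = T m \<longleftrightarrow> i = m" for i m using h by (simp add: T_def)
  have T_sigma: "sigma h (T i) = T (Suc i)" for i by (simp add: T_def sigma_def algebra_simps)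
  define \<eta> :: "real \<Rightarrow> real" where "\<eta> = (\<lambda>x. if x = sigma h t then 1 else 0)"
  have \<eta>_T: "\<eta> (T i) = (if i = Suc j then 1 else 0)" for i
    by (simp add: \<eta>_def t flip: T_def) (simp add: T_sigma T_inj)
  define U V where "U i = yh (sigma h (T i))" and "V i = delta_deriv h yh (T i)" for i
  define P Q where "P i = (if i = j then 1 else 0 :: real)"
    and "Q i = ((if i = j then 1 else 0) - (if i = Suc j then 1 else 0)) / h" for i
  have P: "\<eta> (sigma h (T i)) = P i" for i by (simp add: T_sigma \<eta>_T P_def)
  have Q: "delta_deriv h \<eta> (T i) = Q i" for i
    using T_sigma[of i] by (simp add: delta_deriv_def sigma_def \<eta>_T Q_def)
  define g where "g i = (Luu (T i) (U i) (V i) * P i + Luv (T i) (U i) (V i) * Q i) * P i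
     + (Lvu (T i) (U i) (V i) * P i + Lvv (T i) (U i) (V i) * Q i) * Q i" for i
  have "second_variation a h k Luu Luv Lvu Lvv yh \<eta> = h * (\<Sum>i<k. g i)"
    by (simp add: second_variation_def delta_int_def g_def U_def V_def P Q flip: T_def)
  also have "(\<Sum>i<k. g i) = (\<Sum>i\<in>{j, Suc j}. g i)"
    by (rule sum.mono_neutral_right) (use j in \<open>auto simp: g_def P_def Q_def\<close>)
  also have "\<dots> = g j + g (Suc j)" by simp
  finally have sv: "second_variation a h k Luu Luv Lvu Lvv yh \<eta> = h * (g j + g (Suc j))" .
  have t_T: "t = T j" "sigma h t = T (Suc j)" using t by (simp_all add: T_def T_sigma flip: T_def)
  have "h * (h * (g j + g (Suc j))) = h^2 * Luu (T j) (U j) (V j) + 2 * h * Luv (T j) (U j) (V j)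
      + Lvv (T j) (U j) (V j) + Lvv (T (Suc j)) (U (Suc j)) (V (Suc j))"
    using h sym unfolding t_T
    by (simp add: g_def P_def Q_def U_def V_def T_sigma field_simps power2_eq_square)
  then have "h * second_variation a h k Luu Luv Lvu Lvv yh \<eta> =
     h^2 * Luu t (yh (sigma h t)) (delta_deriv h yh t)
     + 2 * h * Luv t (yh (sigma h t)) (delta_deriv h yh t)
     + Lvv t (yh (sigma h t)) (delta_deriv h yh t)
     + Lvv (sigma h t) (yh (sigma h (sigma h t))) (delta_deriv h yh (sigma h t))"
    unfolding sv t_T by (simp add: U_def V_def T_sigma)
  then show ?thesis by (simp only: \<eta>_def)
qed

theorem mainTheorem13:
  fixes a h A B :: real and k :: nat
    and L Lu Lv Luu Luv Lvu Lvv :: "real \<Rightarrow> real \<Rightarrow> real \<Rightarrow> real"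
    and yh :: "real \<Rightarrow> real"
  assumes h: "h > 0" and k: "k \<ge> 2"
    and dL: "\<And>t u v. t \<in> Tkappa a h k \<Longrightarrow>
       ((\<lambda>(p::real \<times> real). L t (fst p) (snd p)) has_derivative
          (\<lambda>d. Lu t u v * fst d + Lv t u v * snd d)) (at (u, v))"
    and dLu: "\<And>t u v. t \<in> Tkappa a h k \<Longrightarrow>
       ((\<lambda>(p::real \<times> real). Lu t (fst p) (snd p)) has_derivative
          (\<lambda>d. Luu t u v * fst d + Luv t u v * snd d)) (at (u, v))"
    and dLv: "\<And>t u v. t \<in> Tkappa a h k \<Longrightarrow>
       ((\<lambda>(p::real \<times> real). Lv t (fst p) (snd p)) has_derivative
          (\<lambda>d. Lvu t u v * fst d + Lvv t u v * snd d)) (at (u, v))"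
    and cont: "\<And>t. t \<in> Tkappa a h k \<Longrightarrow>
       continuous_on UNIV (\<lambda>(p::real \<times> real). Luu t (fst p) (snd p)) \<and>
       continuous_on UNIV (\<lambda>(p::real \<times> real). Luv t (fst p) (snd p)) \<and>
       continuous_on UNIV (\<lambda>(p::real \<times> real). Lvu t (fst p) (snd p)) \<and>
       continuous_on UNIV (\<lambda>(p::real \<times> real). Lvv t (fst p) (snd p))"
    and min: "local_minimizer a h k L A B yh"
  shows "\<forall>t \<in> Tkappa2 a h k.
     h^2 * Luu t (yh (sigma h t)) (delta_deriv h yh t)
     + 2 * h * Luv t (yh (sigma h t)) (delta_deriv h yh t)
     + Lvv t (yh (sigma h t)) (delta_deriv h yh t)
     + Lvv (sigma h t) (yh (sigma h (sigma h t))) (delta_deriv h yh (sigma h t)) \<ge> 0"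
proof
  fix t assume "t \<in> Tkappa2 a h k"
  then obtain j where j: "j + 1 < k" and t: "t = a + real j * h" by (auto simp: Tkappa2_def)
  have tK: "t \<in> Tkappa a h k" using j t by (auto simp: Tkappa_def)
  have sym: "Luv t (yh (sigma h t)) (delta_deriv h yh t) = Lvu t (yh (sigma h t)) (delta_deriv h yh t)"
    using cont[OF tK] by (intro mixed_partials_eq[OF dL[OF tK] dLu[OF tK] dLv[OF tK]]) auto
  (* the unit bump at sigma(t) is admissible: sigma(t) lies strictly between a and b *)
  have "real (j + 1) * h < real k * h" using h j by (intro mult_strict_right_mono) auto
  then have "a < sigma h t" "sigma h t < a + real k * h"
    using h by (simp_all add: t sigma_def algebra_simps add_pos_nonneg)
  then have "0 \<le> second_variation a h k Luu Luv Lvu Lvv yh (\<lambda>x. if x = sigma h t then 1 else 0)"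
    using k by (intro second_variation_nonneg[OF _ dL dLu dLv min]) auto
  then show "h^2 * Luu t (yh (sigma h t)) (delta_deriv h yh t)
     + 2 * h * Luv t (yh (sigma h t)) (delta_deriv h yh t)
     + Lvv t (yh (sigma h t)) (delta_deriv h yh t)
     + Lvv (sigma h t) (yh (sigma h (sigma h t))) (delta_deriv h yh (sigma h t)) \<ge> 0"
    using second_variation_unit_bump[where Luu=Luu and Luv=Luv and Lvu=Lvu and Lvv=Lvv
        and yh=yh, OF h j t sym] h
    by (metis mult_nonneg_nonneg less_imp_le)
qed

end
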